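(* Let $W=W(v_0;v_1,\dots,v_k)$ be a $k$-wheel and $T$ a coupled tree of $W$. Then at least one of the following holds: (a) for all $i\in[1,k]$, $v_0v_i\in T$ if and only if $v_iv_{i+1}\in\bar T$; or (b) for all $i\in[1,k]$, $v_0v_i\in T$ if and only if $v_{i-1}v_i\in\bar T$.
   Context: For $k\ge 3$ and distinct vertices $v_0,\dots,v_k$, the $k$-wheel $W=W(v_0;v_1,\dots,v_k)$ is the graph whose edges are the radii $v_0v_i$ ($1\le i\le k$) and the chords $v_iv_{i+1}$ ($1\le i\le k$); spoke indices are read cyclically in $[1,k]$ (so $v_{k+1}=v_1$, $v_{1-1}=v_k$). A coupled tree of $W$ is a spanning tree $T\subseteq E(W)$ of $V(W)$ such that $\bar T=E(W)\setminus T$ is also a spanning tree of $V(W)$. *)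

theory Defs
  imports Main
begin

definition edges_on :: "'a set \<Rightarrow> 'a set set \<Rightarrow> bool" where
  "edges_on V F \<longleftrightarrow> (\<forall>e\<in>F. \<exists>x y. e = {x, y} \<and> x \<noteq> y \<and> x \<in> V \<and> y \<in> V)"

definition adj :: "'a set set \<Rightarrow> ('a \<times> 'a) set" where
  "adj F = {(x, y). {x, y} \<in> F \<and> x \<noteq> y}"

definition connected_on :: "'a set \<Rightarrow> 'a set set \<Rightarrow> bool" where
  "connected_on V F \<longleftrightarrow> (\<forall>x\<in>V. \<forall>y\<in>V. (x, y) \<in> (adj F)\<^sup>*)"

definition is_cycle :: "'a set set \<Rightarrow> 'a list \<Rightarrow> bool" where
  "is_cycle F xs \<longleftrightarrow> length xs \<ge> 3 \<and> distinct xs \<and>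
     (\<forall>i < length xs. {xs ! i, xs ! ((i + 1) mod length xs)} \<in> F)"

definition acyclic_edges :: "'a set set \<Rightarrow> bool" where
  "acyclic_edges F \<longleftrightarrow> (\<nexists>xs. is_cycle F xs)"

definition spanning_tree :: "'a set \<Rightarrow> 'a set set \<Rightarrow> bool" where
  "spanning_tree V F \<longleftrightarrow> edges_on V F \<and> connected_on V F \<and> acyclic_edges F"

text \<open>Cyclic successor / predecessor of spoke indices in [1,k].\<close>
definition nxt :: "nat \<Rightarrow> nat \<Rightarrow> nat" where
  "nxt k i = (if i = k then 1 else i + 1)"

definition prv :: "nat \<Rightarrow> nat \<Rightarrow> nat" where
  "prv k i = (if i = 1 then k else i - 1)"

definition radius :: "(nat \<Rightarrow> 'a) \<Rightarrow> nat \<Rightarrow> 'a set" where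
  "radius v i = {v 0, v i}"

definition chord :: "nat \<Rightarrow> (nat \<Rightarrow> 'a) \<Rightarrow> nat \<Rightarrow> 'a set" where
  "chord k v i = {v i, v (nxt k i)}"

definition wheel_vertices :: "nat \<Rightarrow> (nat \<Rightarrow> 'a) \<Rightarrow> 'a set" where
  "wheel_vertices k v = v ` {0..k}"

definition wheel_edges :: "nat \<Rightarrow> (nat \<Rightarrow> 'a) \<Rightarrow> 'a set set" where
  "wheel_edges k v = radius v ` {1..k} \<union> chord k v ` {1..k}"

definition coupled_tree :: "nat \<Rightarrow> (nat \<Rightarrow> 'a) \<Rightarrow> 'a set set \<Rightarrow> bool" where
  "coupled_tree k v T \<longleftrightarrow> T \<subseteq> wheel_edges k v \<and>
     spanning_tree (wheel_vertices k v) T \<and>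
     spanning_tree (wheel_vertices k v) (wheel_edges k v - T)"

end

theory Submission
  imports Defs
begin

text \<open>Colour each edge of the wheel by whether it lies in T; both colour classes are acyclic.
  So the rim is not monochromatic, and a fan -- a radius followed by consecutive chords of its
  colour -- is never closed by a radius of the same colour. If (a) fails, some radius v_0 v_i has
  the colour of the chord v_i v_(i+1), so this chord ends a monochromatic fan. The radius behind the
  last chord of a fan has the other colour, and the next chord either prolongs the fan or, taking
  the colour of that radius, ends a new one-chord fan. Going round the wheel, every chord
  v_i v_(i+1) therefore differs in colour from the radius v_0 v_(i+1), which is (b).\<close>

lemma closed_path_not_acyclic:
  assumes "inj_on f {0..<n}" and "3 \<le> n"
    and "\<And>i. Suc i < n \<Longrightarrow> {f i, f (Suc i)} \<in> F" and "{f (n - 1), f 0} \<in> F"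
  shows "\<not> acyclic_edges F"
proof -
  have "is_cycle F (map f [0..<n])"
    unfolding is_cycle_def
  proof (intro conjI allI impI)
    fix i assume "i < length (map f [0..<n])"
    then show "{map f [0..<n] ! i, map f [0..<n] ! ((i + 1) mod length (map f [0..<n]))} \<in> F"
      using assms(3,4) by (cases "Suc i = n") auto
  qed (use assms(1,2) in \<open>simp_all add: distinct_map\<close>)
  then show ?thesis
    unfolding acyclic_edges_def by blast
qed

lemma mod_add_left_inj_on:
  fixes j k :: nat
  shows "inj_on (\<lambda>s. (j + s) mod k) {0..<k}"
proof (rule linorder_inj_onI')
  fix s s' assume "s \<in> {0..<k}" "s' \<in> {0..<k}" "s < s'"
  show "(j + s) mod k \<noteq> (j + s') mod k"
  proof
    assume eq: "(j + s) mod k = (j + s') mod k"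
    have "j + s \<le> j + s'"
      using \<open>s < s'\<close> by simp
    then obtain q where q: "j + s' = j + s + k * q"
      using mod_eq_nat1E[OF eq[symmetric]] by blast
    moreover have "s' < k"
      using \<open>s' \<in> {0..<k}\<close> by simp
    ultimately have "k * q < k"
      by linarith
    then have "q = 0"
      using mult_less_cancel1[of k q 1] by simp
    with q \<open>s < s'\<close> show False
      by simp
  qed
qed

lemma shifted_alternation_if_aligned:
  fixes rad ch :: "nat \<Rightarrow> bool" and k :: nat
  assumes fan: "\<And>j t. 0 < t \<Longrightarrow> t < k \<Longrightarrow> \<forall>s<t. ch (j + s) = rad j \<Longrightarrow> rad (j + t) \<noteq> rad j"
    and rim: "\<And>j. \<exists>s<k. ch (j + s) \<noteq> ch j"
    and rad_mod: "\<And>j. rad (j mod k) = rad j" and ch_mod: "\<And>j. ch (j mod k) = ch j"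
    and aligned: "rad j = ch j"
  shows "rad (Suc m) \<noteq> ch m"
proof -
  define run where "run m \<longleftrightarrow> (\<exists>s\<le>m. rad s = ch m \<and> (\<forall>i\<in>{s..m}. ch i = ch m))" for m
  have run_ends: "rad (Suc m) \<noteq> ch m" if run_m: "run m" for m
  proof -
    obtain s where s: "s \<le> m" "rad s = ch m" and mono: "\<And>i. i \<in> {s..m} \<Longrightarrow> ch i = ch m"
      using run_m by (auto simp only: run_def)
    have "Suc m - s < k"
    proof (rule ccontr)
      assume "\<not> Suc m - s < k"
      then have "ch (s + u) = ch s" if "u < k" for u
        using mono[of s] mono[of "s + u"] s(1) that by simp
      with rim[of s] show False
        by blast
    qed
    moreover have "\<forall>u < Suc m - s. ch (s + u) = rad s"
    proof (intro allI impI)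
      fix u assume "u < Suc m - s"
      then show "ch (s + u) = rad s"
        using mono[of "s + u"] s(2) by simp
    qed
    ultimately have "rad (s + (Suc m - s)) \<noteq> rad s"
      using fan[of "Suc m - s" s] s(1) by simp
    then show ?thesis
      using s by simp
  qed
  have run_Suc: "run (Suc m)" if run_m: "run m" for m
  proof (cases "ch (Suc m) = ch m")
    case True
    obtain s where s: "s \<le> m" "rad s = ch m" and mono: "\<And>i. i \<in> {s..m} \<Longrightarrow> ch i = ch m"
      using run_m by (auto simp only: run_def)
    have "ch i = ch (Suc m)" if "i \<in> {s..Suc m}" for i
    proof (cases "i = Suc m")
      case False
      with that have "i \<in> {s..m}"
        by simp
      with True show ?thesis
        using mono[of i] by simp
    qed simp
    with s True show ?thesis
      unfolding run_def by (metis le_SucI)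
  next
    case False
    with run_ends[OF run_m] have "rad (Suc m) = ch (Suc m)"
      by blast
    then show ?thesis
      unfolding run_def by (metis atLeastAtMost_singleton order_refl singletonD)
  qed
  have "run j"
    unfolding run_def using aligned by (metis atLeastAtMost_singleton order_refl singletonD)
  have run: "run m'" if "j \<le> m'" for m'
    using that by (induction m' rule: dec_induct) (simp_all add: \<open>run j\<close> run_Suc)
  have "0 < k"
    using rim[of 0] by auto
  then have "j \<le> m + k * j"
    by (simp add: trans_le_add2)
  from run_ends[OF run[OF this]] have "rad (Suc m + k * j) \<noteq> ch (m + k * j)"
    by simp
  moreover have "rad (Suc m + k * j) = rad (Suc m)" "ch (m + k * j) = ch m"
    using rad_mod[of "Suc m + k * j"] rad_mod[of "Suc m"] ch_mod[of "m + k * j"] ch_mod[of m]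
    by simp_all
  ultimately show ?thesis
    by simp
qed

text \<open>Rim vertices indexed periodically by all of \<open>nat\<close>, so that fans and runs of chords
  are intervals of indices without wrap-around.\<close>

definition rim :: "nat \<Rightarrow> (nat \<Rightarrow> 'a) \<Rightarrow> nat \<Rightarrow> 'a" where
  "rim k v j = v (j mod k + 1)"

lemma rim_eq_iff:
  assumes "inj_on v {0..k}" and "0 < k"
  shows "rim k v i = rim k v j \<longleftrightarrow> i mod k = j mod k"
proof -
  have "i mod k + 1 \<in> {0..k}" "j mod k + 1 \<in> {0..k}"
    using assms(2) by (simp_all add: Suc_leI)
  then show ?thesis
    unfolding rim_def using inj_onD[OF assms(1)] by fastforce
qed

lemma rim_neq_hub:
  assumes "inj_on v {0..k}" and "0 < k"
  shows "rim k v j \<noteq> v 0"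
proof -
  have "j mod k + 1 \<in> {0..k}"
    using assms(2) by (simp add: Suc_leI)
  then show ?thesis
    unfolding rim_def using inj_onD[OF assms(1), of "j mod k + 1" 0] by auto
qed

lemma inj_on_rim_shift:
  assumes "inj_on v {0..k}" and "n \<le> k"
  shows "inj_on (\<lambda>s. rim k v (j + s)) {0..<n}"
proof (rule inj_onI)
  fix s s' assume s: "s \<in> {0..<n}" and s': "s' \<in> {0..<n}"
    and eq: "rim k v (j + s) = rim k v (j + s')"
  have "0 < k"
    using s assms(2) by simp
  have "(j + s) mod k = (j + s') mod k"
    using eq unfolding rim_eq_iff[OF assms(1) \<open>0 < k\<close>] .
  moreover have "s \<in> {0..<k}" "s' \<in> {0..<k}"
    using s s' assms(2) by auto
  ultimately show "s = s'"
    by (rule inj_onD[OF mod_add_left_inj_on])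
qed

lemma acyclic_fan_radius_notin:
  assumes "acyclic_edges F" and "inj_on v {0..k}" and "0 < t" "t < k"
    and "{v 0, rim k v j} \<in> F"
    and "\<forall>s<t. {rim k v (j + s), rim k v (Suc (j + s))} \<in> F"
  shows "{v 0, rim k v (j + t)} \<notin> F"
proof
  assume closing: "{v 0, rim k v (j + t)} \<in> F"
  define f where "f i = (if i = 0 then v 0 else rim k v (j + (i - 1)))" for i
  have "inj_on f {0..<t + 2}"
  proof -
    have rim_inj: "inj_on (\<lambda>s. rim k v (j + s)) {0..<t + 1}"
      using inj_on_rim_shift[OF assms(2)] assms(4) by simp
    have "inj_on f {1..<t + 2}"
    proof (rule inj_onI)
      fix x y assume "x \<in> {1..<t + 2}" "y \<in> {1..<t + 2}" "f x = f y"
      then have "x - 1 = y - 1"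
        using inj_onD[OF rim_inj, of "x - 1" "y - 1"] unfolding f_def by auto
      with \<open>x \<in> {1..<t + 2}\<close> \<open>y \<in> {1..<t + 2}\<close> show "x = y"
        by auto
    qed
    moreover have "v 0 \<notin> f ` {1..<t + 2}"
      unfolding f_def using rim_neq_hub[OF assms(2), symmetric] assms(4) by auto
    moreover have "{0..<t + 2} = insert 0 {1..<t + 2}"
      by auto
    ultimately show ?thesis
      by (simp add: f_def)
  qed
  moreover have "{f i, f (Suc i)} \<in> F" if "Suc i < t + 2" for i
    using that assms(5,6) unfolding f_def by (cases i) auto
  moreover have "{f (t + 2 - 1), f 0} \<in> F"
    using closing unfolding f_def by (simp add: insert_commute)
  ultimately show False
    using closed_path_not_acyclic[of f "t + 2" F] assms(1,3) by simp
qed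

lemma acyclic_rim_chord_notin:
  assumes "acyclic_edges F" and "inj_on v {0..k}" and "3 \<le> k"
  shows "\<exists>s<k. {rim k v (j + s), rim k v (Suc (j + s))} \<notin> F"
proof (rule ccontr)
  assume "\<not> ?thesis"
  then have chords: "{rim k v (j + s), rim k v (Suc (j + s))} \<in> F" if "s < k" for s
    using that by blast
  have "rim k v (Suc (j + (k - 1))) = rim k v (j + 0)"
    using assms(3) unfolding rim_def by simp
  then have "{rim k v (j + (k - 1)), rim k v (j + 0)} \<in> F"
    using chords[of "k - 1"] assms(3) by simp
  moreover have "{rim k v (j + i), rim k v (j + Suc i)} \<in> F" if "Suc i < k" for i
    using chords[of i] that by simp
  ultimately show False
    using closed_path_not_acyclic[of "\<lambda>s. rim k v (j + s)" k F] assms inj_on_rim_shift[OF assms(2)]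
    by auto
qed

lemma radius_rim: "radius v (j mod k + 1) = {v 0, rim k v j}"
  by (simp add: radius_def rim_def)

lemma chord_rim:
  assumes "0 < k"
  shows "chord k v (j mod k + 1) = {rim k v j, rim k v (Suc j)}"
proof -
  have "nxt k (j mod k + 1) = Suc j mod k + 1"
    using assms mod_less_divisor[OF assms, of j] by (auto simp: nxt_def mod_Suc)
  then show ?thesis
    by (simp add: chord_def rim_def)
qed

lemma radius_rim_in_wheel_edges:
  assumes "0 < k"
  shows "{v 0, rim k v j} \<in> wheel_edges k v"
proof -
  have "j mod k + 1 \<in> {1..k}"
    using assms by (simp add: Suc_leI)
  then show ?thesis
    unfolding wheel_edges_def by (metis UnI1 image_eqI radius_rim)
qed

lemma chord_rim_in_wheel_edges:
  assumes "0 < k"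
  shows "{rim k v j, rim k v (Suc j)} \<in> wheel_edges k v"
proof -
  have "j mod k + 1 \<in> {1..k}"
    using assms by (simp add: Suc_leI)
  then show ?thesis
    unfolding wheel_edges_def by (metis UnI2 image_eqI chord_rim[OF assms])
qed

lemma prv_Suc_mod:
  assumes "0 < k"
  shows "prv k (Suc j mod k + 1) = j mod k + 1"
  using assms mod_less_divisor[OF assms, of j] by (auto simp: prv_def mod_Suc)

lemma coupled_tree_colour_class_acyclic:
  assumes "coupled_tree k v T"
  shows "acyclic_edges (if c then T else wheel_edges k v - T)"
  using assms unfolding coupled_tree_def spanning_tree_def by simp

lemma coupled_tree_fan:
  assumes "coupled_tree k v T" and "inj_on v {0..k}" and "0 < t" "t < k"
    and "\<forall>s<t. ({rim k v (j + s), rim k v (Suc (j + s))} \<in> T) = ({v 0, rim k v j} \<in> T)"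
  shows "({v 0, rim k v (j + t)} \<in> T) \<noteq> ({v 0, rim k v j} \<in> T)"
proof -
  define F where "F = (if {v 0, rim k v j} \<in> T then T else wheel_edges k v - T)"
  have colour: "e \<in> F \<longleftrightarrow> (e \<in> T) = ({v 0, rim k v j} \<in> T)" if "e \<in> wheel_edges k v" for e
    using that unfolding F_def by auto
  have k: "0 < k"
    using assms(4) by simp
  have "{v 0, rim k v (j + t)} \<notin> F"
  proof (rule acyclic_fan_radius_notin[OF _ assms(2-4)])
    show "acyclic_edges F"
      unfolding F_def by (rule coupled_tree_colour_class_acyclic[OF assms(1)])
    show "{v 0, rim k v j} \<in> F"
      using colour radius_rim_in_wheel_edges[OF k] by blast
    show "\<forall>s<t. {rim k v (j + s), rim k v (Suc (j + s))} \<in> F"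
      using colour chord_rim_in_wheel_edges[OF k] assms(5) by blast
  qed
  then show ?thesis
    using colour radius_rim_in_wheel_edges[OF k] by blast
qed

lemma coupled_tree_rim:
  assumes "coupled_tree k v T" and "inj_on v {0..k}" and "3 \<le> k"
  shows "\<exists>s<k. ({rim k v (j + s), rim k v (Suc (j + s))} \<in> T) \<noteq> ({rim k v j, rim k v (Suc j)} \<in> T)"
proof -
  define F where "F = (if {rim k v j, rim k v (Suc j)} \<in> T then T else wheel_edges k v - T)"
  have k: "0 < k"
    using assms(3) by simp
  have colour: "e \<in> F \<longleftrightarrow> (e \<in> T) = ({rim k v j, rim k v (Suc j)} \<in> T)" if "e \<in> wheel_edges k v" for e
    using that unfolding F_def by auto
  obtain s where "s < k" "{rim k v (j + s), rim k v (Suc (j + s))} \<notin> F"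
    using acyclic_rim_chord_notin[OF _ assms(2,3)] coupled_tree_colour_class_acyclic[OF assms(1)]
    unfolding F_def by blast
  then show ?thesis
    using colour chord_rim_in_wheel_edges[OF k] by blast
qed

lemma coupled_tree_shifted_alternation:
  assumes "coupled_tree k v T" and "inj_on v {0..k}" and "3 \<le> k"
    and "({v 0, rim k v j} \<in> T) = ({rim k v j, rim k v (Suc j)} \<in> T)"
  shows "({v 0, rim k v (Suc m)} \<in> T) \<noteq> ({rim k v m, rim k v (Suc m)} \<in> T)"
proof (rule shifted_alternation_if_aligned[where rad = "\<lambda>j. {v 0, rim k v j} \<in> T"
      and ch = "\<lambda>j. {rim k v j, rim k v (Suc j)} \<in> T", OF _ _ _ _ assms(4)])
  show "({v 0, rim k v (j + t)} \<in> T) \<noteq> ({v 0, rim k v j} \<in> T)"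
    if "0 < t" "t < k" "\<forall>s<t. ({rim k v (j + s), rim k v (Suc (j + s))} \<in> T) = ({v 0, rim k v j} \<in> T)"
    for j t
    using coupled_tree_fan[OF assms(1,2) that] .
  show "\<exists>s<k. ({rim k v (j + s), rim k v (Suc (j + s))} \<in> T) \<noteq> ({rim k v j, rim k v (Suc j)} \<in> T)"
    for j
    using coupled_tree_rim[OF assms(1-3)] .
  show "({v 0, rim k v (j mod k)} \<in> T) = ({v 0, rim k v j} \<in> T)"
    and "({rim k v (j mod k), rim k v (Suc (j mod k))} \<in> T) = ({rim k v j, rim k v (Suc j)} \<in> T)"
    for j
    by (simp_all add: rim_def mod_Suc_eq)
qed

lemma ball_spokes_mod:
  fixes k :: nat
  assumes "0 < k"
  shows "(\<forall>i\<in>{1..k}. P i) \<longleftrightarrow> (\<forall>j. P (j mod k + 1))"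
proof -
  have "i = (i - 1) mod k + 1" if "i \<in> {1..k}" for i
    using that by auto
  moreover have "j mod k + 1 \<in> {1..k}" for j
    using assms by (simp add: Suc_leI)
  ultimately show ?thesis
    by metis
qed

lemma ball_spokes_Suc_mod:
  fixes k :: nat
  assumes "0 < k"
  shows "(\<forall>i\<in>{1..k}. P i) \<longleftrightarrow> (\<forall>j. P (Suc j mod k + 1))"
proof -
  have "j mod k = Suc (j + (k - 1)) mod k" for j
    using assms by simp
  then show ?thesis
    unfolding ball_spokes_mod[OF assms] by metis
qed

theorem lemma3p2:
  fixes k :: nat and v :: "nat \<Rightarrow> 'a" and T :: "'a set set"
  assumes "k \<ge> 3"
    and "inj_on v {0..k}"
    and "coupled_tree k v T"
  shows "(\<forall>i\<in>{1..k}. radius v i \<in> T \<longleftrightarrow> chord k v i \<in> wheel_edges k v - T)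
       \<or> (\<forall>i\<in>{1..k}. radius v i \<in> T \<longleftrightarrow> chord k v (prv k i) \<in> wheel_edges k v - T)"
proof -
  have k: "0 < k"
    using assms(1) by simp
  define rad where "rad j \<longleftrightarrow> {v 0, rim k v j} \<in> T" for j
  define ch where "ch j \<longleftrightarrow> {rim k v j, rim k v (Suc j)} \<in> T" for j
  have radius_iff: "radius v (j mod k + 1) \<in> T \<longleftrightarrow> rad j" for j
    unfolding rad_def radius_rim ..
  have chord_iff: "chord k v (j mod k + 1) \<in> wheel_edges k v - T \<longleftrightarrow> \<not> ch j" for j
    unfolding ch_def chord_rim[OF k] using chord_rim_in_wheel_edges[OF k] by blast
  have "(\<forall>j. rad j \<noteq> ch j) \<or> (\<forall>j. rad (Suc j) \<noteq> ch j)"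
    using coupled_tree_shifted_alternation[OF assms(3,2,1)] unfolding rad_def ch_def by blast
  moreover have "\<forall>i\<in>{1..k}. radius v i \<in> T \<longleftrightarrow> chord k v i \<in> wheel_edges k v - T"
    if "\<forall>j. rad j \<noteq> ch j"
    using that unfolding ball_spokes_mod[OF k] radius_iff chord_iff by blast
  moreover have "\<forall>i\<in>{1..k}. radius v i \<in> T \<longleftrightarrow> chord k v (prv k i) \<in> wheel_edges k v - T"
    if "\<forall>j. rad (Suc j) \<noteq> ch j"
    using that unfolding ball_spokes_Suc_mod[OF k] prv_Suc_mod[OF k] radius_iff chord_iff by blast
  ultimately show ?thesis
    by blast
qed

end
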